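(* Let $N\ge1$ and $0<b_1<\cdots<b_N$. The set $\mathbf{S}$ of continuous functions $g:\mathbb{R}\to\mathbb{R}$ satisfying $g(w)+g(w+b_1)+\cdots+g(w+b_N)=0$ for all $w\in\mathbb{R}$ is an infinite-dimensional real vector space. Consequently, for any reals $1<a_1<\cdots<a_N$, the space of continuous functions $f:(0,\infty)\to\mathbb{R}$ satisfying $f(x)+f(a_1x)+\cdots+f(a_Nx)=0$ for all $x\in(0,\infty)$ is an infinite-dimensional real vector space. *)

theory Defs
  imports "HOL-Analysis.Analysis" "HOL-Library.Function_Algebras"
begin

definition fscale :: "real \<Rightarrow> ('a \<Rightarrow> real) \<Rightarrow> ('a \<Rightarrow> real)" where
  "fscale c f = (\<lambda>x. c * f x)"

definition inf_dim_fun_space :: "('a \<Rightarrow> real) set \<Rightarrow> bool" where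
  "inf_dim_fun_space S \<longleftrightarrow>
     module.subspace fscale S \<and>
     (\<exists>B. B \<subseteq> S \<and> infinite B \<and> \<not> module.dependent fscale B)"

definition S_add :: "nat \<Rightarrow> (nat \<Rightarrow> real) \<Rightarrow> (real \<Rightarrow> real) set" where
  "S_add N b = {g. continuous_on UNIV g \<and>
      (\<forall>w. g w + (\<Sum>i=1..N. g (w + b i)) = 0)}"

text \<open>Continuous f : (0,inf) -> R with f x + sum f (a_i x) = 0 for x > 0.
  Functions on (0,inf) are represented extensionally as real => real
  functions vanishing outside (0,inf).\<close>
definition S_mult :: "nat \<Rightarrow> (nat \<Rightarrow> real) \<Rightarrow> (real \<Rightarrow> real) set" where
  "S_mult N a = {f. continuous_on {0<..} f \<and> (\<forall>x. x \<le> 0 \<longrightarrow> f x = 0) \<and>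
      (\<forall>x>0. f x + (\<Sum>i=1..N. f (a i * x)) = 0)}"

end

theory Submission
  imports Defs
begin

(* Write B = b N.  The functional equation
     g w + g (w + b 1) + ... + g (w + b N) = 0
   can be solved for g w (which determines g to the left of the window [0, B]
   from values further right) and for g (w + B) (which determines g to the
   right of the window from values further left).  Hence every continuous
   function on the window that satisfies the equation at w = 0 extends to a
   continuous solution on all of R.  The extension is the fixed point of the
   "solve the equation" operator extend_step; it is obtained by iterating the
   operator, which is local with respect to the growing intervals layer n.
   Tents with pairwise disjoint supports in (0, b 1) are admissible window data,
   so they yield infinitely many solutions each of which is nonzero at a point
   where all the others vanish; such a family is linearly independent.
   The multiplicative case reduces to the additive one by g (ln x). *)

section \<open>Linear independence via dual points\<close>

lemma module_fscale: "module (fscale :: real \<Rightarrow> ('a \<Rightarrow> real) \<Rightarrow> ('a \<Rightarrow> real))"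
  unfolding module_def fscale_def by (auto simp: fun_eq_iff algebra_simps)

lemma sum_fun_apply: "(\<Sum>v\<in>A. F v) x = (\<Sum>v\<in>A. F v x :: 'b :: comm_monoid_add)"
  by (induction A rule: infinite_finite_induct) auto

lemma dual_points_independent:
  fixes h :: "'i \<Rightarrow> 'a \<Rightarrow> real" and p :: "'i \<Rightarrow> 'a"
  assumes vanish: "\<And>k l. k \<noteq> l \<Longrightarrow> h k (p l) = 0" and nonzero: "\<And>k. h k (p k) \<noteq> 0"
  shows "inj h" and "\<not> module.dependent fscale (range h)"
proof -
  show "inj h"
    by (rule injI) (metis vanish nonzero)
  show "\<not> module.dependent fscale (range h)"
  proof
    assume "module.dependent fscale (range h)"
    then obtain t u v where t: "finite t" "t \<subseteq> range h" "(\<Sum>w\<in>t. fscale (u w) w) = 0"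
      and v: "v \<in> t" "u v \<noteq> 0"
      unfolding module.dependent_explicit[OF module_fscale] by auto
    obtain k where k: "v = h k" using t v by blast
    have others: "u w * w (p k) = 0" if w: "w \<in> t - {v}" for w
    proof -
      obtain l where l: "w = h l" using w t(2) by blast
      with w k have "l \<noteq> k" by auto
      then show ?thesis using l vanish by simp
    qed
    have "0 = (\<Sum>w\<in>t. fscale (u w) w) (p k)" using t(3) by simp
    also have "\<dots> = (\<Sum>w\<in>t. u w * w (p k))" by (simp add: sum_fun_apply fscale_def)
    also have "\<dots> = (\<Sum>w\<in>{v}. u w * w (p k))"
      by (rule sum.mono_neutral_right) (use t v others in auto)
    also have "\<dots> = u v * h k (p k)" using k by simp
    finally show False using v nonzero by simp
  qed
qed

lemma inf_dim_fun_spaceI: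
  fixes h :: "nat \<Rightarrow> 'a \<Rightarrow> real"
  assumes "module.subspace fscale S" and "\<And>k. h k \<in> S"
    and "\<And>k l. k \<noteq> l \<Longrightarrow> h k (p l) = 0" and "\<And>k. h k (p k) \<noteq> 0"
  shows "inf_dim_fun_space S"
  unfolding inf_dim_fun_space_def
  using assms dual_points_independent[of h p] range_inj_infinite[of h] by blast

section \<open>Fixed points of local operators\<close>

text \<open>If an operator on functions determines its values on layer n+1 from the
  values of its argument on layer n, and the start function is already fixed on
  layer 0, then the iterates stabilise layer by layer; on an exhausting sequence of
  layers their limit is a fixed point.\<close>
lemma local_iteration_fixpoint:
  fixes Phi :: "('a \<Rightarrow> 'b) \<Rightarrow> 'a \<Rightarrow> 'b" and I :: "nat \<Rightarrow> 'a set"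
  assumes grow: "\<And>n. I n \<subseteq> I (Suc n)" and cover: "\<And>x. \<exists>n. x \<in> I n"
    and local: "\<And>u v n. \<forall>x\<in>I n. u x = v x \<Longrightarrow> \<forall>x\<in>I (Suc n). Phi u x = Phi v x"
    and base: "\<forall>x\<in>I 0. Phi u0 x = u0 x"
  shows "\<exists>g. Phi g = g \<and> (\<forall>n. \<forall>x\<in>I n. g x = (Phi ^^ n) u0 x)"
proof -
  define G where "G n = (Phi ^^ n) u0" for n
  have step: "\<forall>x\<in>I n. G (Suc n) x = G n x" for n
  proof (induction n)
    case 0 then show ?case using base by (simp add: G_def)
  next
    case (Suc n) then show ?case using local[of n "G (Suc n)" "G n"] by (simp add: G_def)
  qed
  have stable: "\<forall>x\<in>I n. G m x = G n x" if "n \<le> m" for n m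
    using that
  proof (induction m rule: dec_induct)
    case (step m)
    have "I n \<subseteq> I m" using lift_Suc_mono_le[of I, OF grow step(1)] .
    then show ?case using step.IH \<open>\<forall>x\<in>I m. G (Suc m) x = G m x\<close> by auto
  qed simp
  define g where "g x = G (SOME n. x \<in> I n) x" for x
  have agree: "g x = G n x" if "x \<in> I n" for x n
  proof -
    define k where "k = (SOME n. x \<in> I n)"
    have "x \<in> I k" unfolding k_def using cover by (rule someI_ex)
    then show ?thesis
      using stable[of k n] stable[of n k] that unfolding g_def k_def[symmetric]
      by (cases "k \<le> n") auto
  qed
  have "Phi g x = g x" for x
  proof -
    obtain n where x: "x \<in> I n" using cover by blast
    then have "x \<in> I (Suc n)" using grow by blast
    then have "Phi g x = Phi (G n) x" using local[of n g "G n"] agree by blast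
    also have "\<dots> = g x" using agree[OF \<open>x \<in> I (Suc n)\<close>] by (simp add: G_def)
    finally show ?thesis .
  qed
  then show ?thesis using agree unfolding G_def by blast
qed

lemma continuous_on_patch:
  fixes g :: "'a::t2_space \<Rightarrow> 'b::topological_space"
  assumes cont: "\<And>n. continuous_on UNIV (G n)" and agree: "\<And>n x. x \<in> I n \<Longrightarrow> g x = G n x"
    and cover: "\<And>x. \<exists>n. x \<in> interior (I n)"
  shows "continuous_on UNIV g"
proof -
  have "isCont g x" for x
  proof -
    obtain n where x: "x \<in> interior (I n)" using cover by blast
    have "continuous_on (interior (I n)) (G n)" by (rule continuous_on_subset[OF cont]) simp
    moreover have "\<forall>y\<in>interior (I n). g y = G n y" using agree interior_subset by blast
    ultimately have "continuous_on (interior (I n)) g" using continuous_on_cong by metis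
    then show ?thesis using x continuous_on_eq_continuous_at by blast
  qed
  then show ?thesis by (simp add: continuous_on_eq_continuous_at)
qed

definition tent :: "real \<Rightarrow> real \<Rightarrow> real \<Rightarrow> real" where
  "tent lo hi x = max 0 (min (x - lo) (hi - x))"

lemma continuous_tent: "continuous_on UNIV (tent lo hi)"
  unfolding tent_def by (intro continuous_intros)

lemma tent_vanishes: "x \<le> lo \<or> hi \<le> x \<Longrightarrow> tent lo hi x = 0"
  by (auto simp: tent_def)

lemma tent_midpoint_pos: "lo < hi \<Longrightarrow> 0 < tent lo hi ((lo + hi) / 2)"
  by (simp add: tent_def)

lemma tent_other_midpoint:
  fixes u :: "nat \<Rightarrow> real"
  assumes dec: "\<And>k. u (Suc k) < u k" and kl: "k \<noteq> l"
  shows "tent (u (Suc k)) (u k) ((u (Suc l) + u l) / 2) = 0"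
proof (rule tent_vanishes)
  have anti: "m \<le> n \<Longrightarrow> u n \<le> u m" for m n
    using lift_Suc_antimono_le[of u] dec less_imp_le by metis
  show "(u (Suc l) + u l) / 2 \<le> u (Suc k) \<or> u k \<le> (u (Suc l) + u l) / 2"
  proof (cases "k < l")
    case True
    then show ?thesis using anti[of "Suc k" l] dec[of l] by simp
  next
    case False
    then show ?thesis using kl anti[of "Suc l" k] dec[of l] by simp
  qed
qed

section \<open>Extending window data to solutions of the additive equation\<close>

lemma sum_split_last: "1 \<le> (N :: nat) \<Longrightarrow> (\<Sum>i=1..N. f i) = (\<Sum>i=1..N - 1. f i) + (f N :: 'a :: comm_monoid_add)"
  by (cases N) (simp_all add: add.commute)

context
  fixes N :: nat and b :: "nat \<Rightarrow> real"
  assumes N_pos: "N \<ge> 1" and b1_pos: "0 < b 1" and b_strict: "strict_mono_on {1..N} b"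
begin

lemma b_le: "i \<in> {1..N} \<Longrightarrow> j \<in> {1..N} \<Longrightarrow> i \<le> j \<Longrightarrow> b i \<le> b j"
  using strict_mono_onD[OF b_strict, of i j] by (cases "i = j") auto

text \<open>The layers grow by gap, the largest step that keeps every shift used by
  the operator below inside the previous layer.\<close>
definition gap :: real where
  "gap = (if N = 1 then b 1 else min (b 1) (b N - b (N - 1)))"

lemma gap_pos: "0 < gap"
proof (cases "N = 1")
  case False
  then have "b (N - 1) < b N" using N_pos by (intro strict_mono_onD[OF b_strict]) auto
  then show ?thesis using False b1_pos unfolding gap_def by simp
next
  case True
  then show ?thesis unfolding gap_def using b1_pos by simp
qed

lemma gap_le_shift: "i \<in> {1..N} \<Longrightarrow> gap \<le> b i"
  using b_le[of 1 i] unfolding gap_def by auto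

lemma shift_le_last: "i \<in> {1..N} \<Longrightarrow> b i \<le> b N"
  using b_le[of i N] N_pos by auto

lemma last_shift_pos: "0 < b N"
  using gap_le_shift[of N] gap_pos N_pos by simp

lemma shift_gap_le_last:
  assumes i: "i \<in> {1..N - 1}"
  shows "b i + gap \<le> b N"
proof -
  have "gap \<le> b N - b (N - 1)" using i unfolding gap_def by auto
  moreover have "b i \<le> b (N - 1)" using b_le[of i "N - 1"] i by auto
  ultimately show ?thesis by simp
qed

text \<open>One step of solving the equation: on the window (0, b N] the data phi is
  used, left of it the equation is solved for g w, right of it for g (w' + b N)
  with w' = w - b N.\<close>
definition extend_step :: "(real \<Rightarrow> real) \<Rightarrow> (real \<Rightarrow> real) \<Rightarrow> real \<Rightarrow> real" where
  "extend_step \<phi> u w =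
     (if w \<le> 0 then - (\<Sum>i=1..N. u (w + b i))
      else if w \<le> b N then \<phi> w
      else - u (w - b N) - (\<Sum>i=1..N-1. u (w - b N + b i)))"

definition layer :: "nat \<Rightarrow> real set" where
  "layer n = {- (real n * gap) .. b N + real n * gap}"

lemma layer_0: "layer 0 = {0..b N}"
  by (simp add: layer_def)

lemma layer_grow: "layer n \<subseteq> layer (Suc n)"
  using gap_pos by (auto simp: layer_def algebra_simps)

lemma layer_interior_cover: "\<exists>n. x \<in> interior (layer n)"
proof -
  obtain n :: nat where "\<bar>x\<bar> / gap < real n" using reals_Archimedean2 by blast
  then have "\<bar>x\<bar> < real n * gap" using gap_pos by (simp add: field_simps)
  then have "x \<in> interior (layer n)"
    using shift_le_last[of N] gap_le_shift[of N] gap_pos N_pos by (auto simp: layer_def)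
  then show ?thesis by blast
qed

lemma extend_step_local:
  assumes uv: "\<forall>x\<in>layer n. u x = v x" and w: "w \<in> layer (Suc n)"
  shows "extend_step \<phi> u w = extend_step \<phi> v w"
proof -
  have ng: "0 \<le> real n * gap" using gap_pos by simp
  have w_lo: "- (real n * gap) - gap \<le> w" and w_hi: "w \<le> b N + real n * gap + gap"
    using w by (auto simp: layer_def algebra_simps)
  have gap_B: "gap \<le> b N" using gap_le_shift[of N] N_pos by simp
  consider "w \<le> 0" | "0 < w" "w \<le> b N" | "b N < w" by linarith
  then show ?thesis
  proof cases
    case 1
    have "w + b i \<in> layer n" if "i \<in> {1..N}" for i
      using w_lo 1 ng gap_le_shift[OF that] shift_le_last[OF that] by (auto simp: layer_def)
    then show ?thesis using 1 uv by (simp add: extend_step_def)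
  next
    case 2 then show ?thesis by (simp add: extend_step_def)
  next
    case 3
    have "w - b N \<in> layer n" using w_hi 3 gap_B ng by (auto simp: layer_def)
    moreover have "w - b N + b i \<in> layer n" if "i \<in> {1..N - 1}" for i
    proof -
      have "gap \<le> b i" using that by (intro gap_le_shift) auto
      then show ?thesis
        using w_hi 3 ng shift_gap_le_last[OF that] gap_pos by (auto simp: layer_def)
    qed
    ultimately show ?thesis using 3 uv gap_B gap_pos by (simp add: extend_step_def)
  qed
qed

lemma extend_step_window:
  assumes compat: "\<phi> 0 + (\<Sum>i=1..N. \<phi> (b i)) = 0"
    and u: "\<forall>x\<in>{0..b N}. u x = \<phi> x" and x: "x \<in> {0..b N}"
  shows "extend_step \<phi> u x = \<phi> x"
proof (cases "x = 0")
  case True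
  have "(\<Sum>i=1..N. u (b i)) = (\<Sum>i=1..N. \<phi> (b i))"
    using u gap_le_shift shift_le_last gap_pos by (intro sum.cong) force+
  then show ?thesis using True compat by (simp add: extend_step_def)
qed (use x in \<open>auto simp: extend_step_def\<close>)

text \<open>extend_step preserves continuity of functions that agree with the
  window data; the three pieces match at 0 and at b N because of the
  compatibility condition.\<close>
lemma extend_step_continuous:
  assumes cphi: "continuous_on UNIV \<phi>" and compat: "\<phi> 0 + (\<Sum>i=1..N. \<phi> (b i)) = 0"
    and cu: "continuous_on UNIV u" and u: "\<forall>x\<in>{0..b N}. u x = \<phi> x"
  shows "continuous_on UNIV (extend_step \<phi> u)"
proof -
  let ?left = "\<lambda>w. - (\<Sum>i=1..N. u (w + b i))"
  let ?right = "\<lambda>w. - u (w - b N) - (\<Sum>i=1..N - 1. u (w - b N + b i))"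
  have shift: "continuous_on UNIV (\<lambda>w. u (w + c))" for c
    by (rule continuous_on_compose2[OF cu]) (auto intro!: continuous_intros)
  have c_left: "continuous_on {..0} ?left"
    using shift by (auto intro!: continuous_intros intro: continuous_on_subset)
  have "continuous_on UNIV ?right"
    using shift[of "- b N"] shift[of "b i - b N" for i]
    by (auto simp: algebra_simps intro!: continuous_intros)
  then have c_right: "continuous_on {b N..} ?right" by (rule continuous_on_subset) simp
  have c_mid: "continuous_on {0..b N} \<phi>" using cphi by (rule continuous_on_subset) simp
  have "(\<Sum>i=1..N - 1. u (b i)) = (\<Sum>i=1..N - 1. \<phi> (b i))"
    using u gap_le_shift shift_le_last gap_pos by (intro sum.cong) force+
  then have at_B: "?right (b N) = \<phi> (b N)"
    using compat sum_split_last[OF N_pos, of "\<lambda>i. \<phi> (b i)"] u last_shift_pos by simp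
  have at_0: "?left 0 = \<phi> 0"
    using extend_step_window[OF compat u, of 0] last_shift_pos by (simp add: extend_step_def)
  have "continuous_on ({0..b N} \<union> {b N..}) (\<lambda>w. if w \<le> b N then \<phi> w else ?right w)"
    by (rule continuous_on_cases[OF _ _ c_mid c_right]) (use at_B in auto)
  moreover have "{0..b N} \<union> {b N..} = {0::real..}" using last_shift_pos by auto
  ultimately have c_nonneg: "continuous_on {0..} (\<lambda>w. if w \<le> b N then \<phi> w else ?right w)"
    by simp
  have "continuous_on ({..0} \<union> {0..})
      (\<lambda>w. if w \<le> 0 then ?left w else if w \<le> b N then \<phi> w else ?right w)"
    by (rule continuous_on_cases[OF _ _ c_left c_nonneg]) (use at_0 last_shift_pos in auto)
  moreover have "{..0} \<union> {0..} = (UNIV :: real set)" by auto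
  ultimately show ?thesis unfolding extend_step_def by simp
qed

lemma extend_step_fixpoint_solves:
  assumes fixed: "extend_step \<phi> g = g"
  shows "g w + (\<Sum>i=1..N. g (w + b i)) = 0"
proof (cases "w \<le> 0")
  case True
  then show ?thesis using fun_cong[OF fixed, of w] by (simp add: extend_step_def)
next
  case False
  then have "g (w + b N) = - g w - (\<Sum>i=1..N - 1. g (w + b i))"
    using fun_cong[OF fixed, of "w + b N"] last_shift_pos by (simp add: extend_step_def)
  then show ?thesis using sum_split_last[OF N_pos, of "\<lambda>i. g (w + b i)"] by simp
qed

lemma extension_exists:
  assumes cphi: "continuous_on UNIV \<phi>" and compat: "\<phi> 0 + (\<Sum>i=1..N. \<phi> (b i)) = 0"
  shows "\<exists>g\<in>S_add N b. \<forall>x\<in>{0..b N}. g x = \<phi> x"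
proof -
  let ?G = "\<lambda>n. (extend_step \<phi> ^^ n) \<phi>"
  have "\<exists>g. extend_step \<phi> g = g \<and> (\<forall>n. \<forall>x\<in>layer n. g x = ?G n x)"
  proof (rule local_iteration_fixpoint)
    show "layer n \<subseteq> layer (Suc n)" for n by (rule layer_grow)
    show "\<exists>n. x \<in> layer n" for x using layer_interior_cover interior_subset by blast
    show "\<forall>x\<in>layer (Suc n). extend_step \<phi> u x = extend_step \<phi> v x"
      if "\<forall>x\<in>layer n. u x = v x" for u v n using extend_step_local[OF that] by blast
    show "\<forall>x\<in>layer 0. extend_step \<phi> \<phi> x = \<phi> x"
      using extend_step_window[OF compat] by (simp add: layer_0)
  qed
  then obtain g where fixed: "extend_step \<phi> g = g" and agree: "\<And>n x. x \<in> layer n \<Longrightarrow> g x = ?G n x"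
    by blast
  have iterates: "continuous_on UNIV (?G n) \<and> (\<forall>x\<in>{0..b N}. ?G n x = \<phi> x)" for n
  proof (induction n)
    case (Suc n)
    then show ?case
      using extend_step_continuous[OF cphi compat] extend_step_window[OF compat] by simp
  qed (simp add: cphi)
  have "continuous_on UNIV g"
    using continuous_on_patch[of ?G layer g] iterates agree layer_interior_cover by blast
  then have "g \<in> S_add N b"
    using extend_step_fixpoint_solves[OF fixed] by (simp add: S_add_def)
  moreover have "\<forall>x\<in>{0..b N}. g x = \<phi> x" using agree[of _ 0] by (simp add: layer_0)
  ultimately show ?thesis by blast
qed

text \<open>Extending tents over the disjoint intervals (b 1 / (k + 2), b 1 / (k + 1))
  gives a sequence of solutions with dual points (the midpoints).\<close>
lemma dual_family_add:
  "\<exists>(h :: nat \<Rightarrow> real \<Rightarrow> real) p. (\<forall>k. h k \<in> S_add N b) \<and>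
     (\<forall>k l. k \<noteq> l \<longrightarrow> h k (p l) = 0) \<and> (\<forall>k. h k (p k) \<noteq> 0)"
proof -
  define u where "u k = b 1 / (real k + 1)" for k
  define p where "p k = (u (Suc k) + u k) / 2" for k
  have dec: "u (Suc k) < u k" for k
    unfolding u_def using b1_pos by (intro divide_strict_left_mono) auto
  have u_pos: "0 < u k" for k unfolding u_def using b1_pos by simp
  have u_le: "u k \<le> b 1" for k unfolding u_def using b1_pos by (simp add: divide_le_eq)
  have "\<exists>g\<in>S_add N b. \<forall>x\<in>{0..b N}. g x = tent (u (Suc k)) (u k) x" for k
  proof (rule extension_exists[OF continuous_tent])
    have "tent (u (Suc k)) (u k) (b i) = 0" if "i \<in> {1..N}" for i
      using u_le[of k] b_le[of 1 i] that by (intro tent_vanishes) auto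
    moreover have "tent (u (Suc k)) (u k) 0 = 0" using u_pos[of "Suc k"] by (intro tent_vanishes) simp
    ultimately show "tent (u (Suc k)) (u k) 0 + (\<Sum>i=1..N. tent (u (Suc k)) (u k) (b i)) = 0"
      by simp
  qed
  then obtain h where h: "\<And>k. h k \<in> S_add N b"
    and h_window: "\<And>k x. x \<in> {0..b N} \<Longrightarrow> h k x = tent (u (Suc k)) (u k) x"
    by metis
  have p_window: "p k \<in> {0..b N}" for k
    using u_pos[of "Suc k"] dec[of k] u_le[of k] b_le[of 1 N] N_pos by (auto simp: p_def)
  have "h k (p l) = 0" if "k \<noteq> l" for k l
    using h_window[OF p_window] tent_other_midpoint[of u, OF dec that] by (simp add: p_def)
  moreover have "h k (p k) \<noteq> 0" for k
    using h_window[OF p_window] tent_midpoint_pos[OF dec[of k]] by (simp add: p_def)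
  ultimately show ?thesis using h by blast
qed

end

lemma subspace_S_add: "module.subspace fscale (S_add N b)"
  unfolding module.subspace_def[OF module_fscale]
proof (intro conjI ballI allI)
  show "0 \<in> S_add N b" by (simp add: S_add_def zero_fun_def)
next
  fix g h assume g: "g \<in> S_add N b" and h: "h \<in> S_add N b"
  have "(g w + h w) + (\<Sum>i=1..N. g (w + b i) + h (w + b i)) = 0" for w
  proof -
    have "g w + (\<Sum>i=1..N. g (w + b i)) = 0" "h w + (\<Sum>i=1..N. h (w + b i)) = 0"
      using g h by (auto simp: S_add_def)
    then show ?thesis by (simp add: sum.distrib)
  qed
  then show "g + h \<in> S_add N b" using g h by (simp add: S_add_def continuous_on_add)
next
  fix c g assume g: "g \<in> S_add N b"
  have "c * g w + (\<Sum>i=1..N. c * g (w + b i)) = c * (g w + (\<Sum>i=1..N. g (w + b i)))" for w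
    by (simp add: sum_distrib_left algebra_simps)
  then show "fscale c g \<in> S_add N b"
    using g by (simp add: S_add_def fscale_def continuous_on_mult_left)
qed

lemma subspace_S_mult: "module.subspace fscale (S_mult N a)"
  unfolding module.subspace_def[OF module_fscale]
proof (intro conjI ballI allI)
  show "0 \<in> S_mult N a" by (simp add: S_mult_def zero_fun_def)
next
  fix f h assume f: "f \<in> S_mult N a" and h: "h \<in> S_mult N a"
  have "(f x + h x) + (\<Sum>i=1..N. f (a i * x) + h (a i * x)) = 0" if "0 < x" for x
  proof -
    have "f x + (\<Sum>i=1..N. f (a i * x)) = 0" "h x + (\<Sum>i=1..N. h (a i * x)) = 0"
      using f h that by (auto simp: S_mult_def)
    then show ?thesis by (simp add: sum.distrib)
  qed
  then show "f + h \<in> S_mult N a" using f h by (simp add: S_mult_def continuous_on_add)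
next
  fix c f assume f: "f \<in> S_mult N a"
  have "c * f x + (\<Sum>i=1..N. c * f (a i * x)) = c * (f x + (\<Sum>i=1..N. f (a i * x)))" for x
    by (simp add: sum_distrib_left algebra_simps)
  then show "fscale c f \<in> S_mult N a"
    using f by (simp add: S_mult_def fscale_def continuous_on_mult_left)
qed

section \<open>From the additive to the multiplicative equation\<close>

lemma S_add_to_S_mult:
  assumes a_pos: "\<And>i. i \<in> {1..N} \<Longrightarrow> 0 < a i" and g: "g \<in> S_add N (\<lambda>i. ln (a i))"
  shows "(\<lambda>x. if 0 < x then g (ln x) else 0) \<in> S_mult N a" (is "?f \<in> _")
proof -
  have cg: "continuous_on UNIV g" and eq: "\<And>w. g w + (\<Sum>i=1..N. g (w + ln (a i))) = 0"
    using g by (auto simp: S_add_def)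
  have "continuous_on {0<..} (\<lambda>x. g (ln x))"
    by (rule continuous_on_compose2[OF cg]) (auto intro!: continuous_intros)
  then have cont: "continuous_on {0<..} ?f" by (rule continuous_on_cong[THEN iffD1, rotated 2]) auto
  have "?f x + (\<Sum>i=1..N. ?f (a i * x)) = 0" if x: "0 < x" for x
  proof -
    have "(\<Sum>i=1..N. ?f (a i * x)) = (\<Sum>i=1..N. g (ln x + ln (a i)))"
    proof (rule sum.cong[OF refl])
      fix i assume "i \<in> {1..N}"
      then show "?f (a i * x) = g (ln x + ln (a i))"
        using a_pos[of i] x by (simp add: ln_mult add.commute)
    qed
    then show ?thesis using eq[of "ln x"] x by simp
  qed
  then show ?thesis using cont by (simp add: S_mult_def)
qed

lemma log_shifts:
  fixes N :: nat and a :: "nat \<Rightarrow> real"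
  assumes a1: "1 < a 1" and a_strict: "strict_mono_on {1..N} a"
  shows "\<And>i. i \<in> {1..N} \<Longrightarrow> 0 < a i" and "0 < ln (a 1)"
    and "strict_mono_on {1..N} (\<lambda>i. ln (a i))"
proof -
  show a_pos: "0 < a i" if "i \<in> {1..N}" for i
  proof -
    have "a 1 \<le> a i"
    proof (cases "i = 1")
      case False
      with that have "1 < i" by auto
      then show ?thesis using strict_mono_onD[OF a_strict, of 1 i] that by auto
    qed simp
    then show ?thesis using a1 by simp
  qed
  show "0 < ln (a 1)" using a1 by simp
  show "strict_mono_on {1..N} (\<lambda>i. ln (a i))"
    using a_pos strict_mono_onD[OF a_strict] by (intro strict_mono_onI) simp
qed

theorem mainTheorem5:
  fixes N :: nat and b a :: "nat \<Rightarrow> real"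
  assumes "N \<ge> 1"
  shows "(0 < b 1 \<and> strict_mono_on {1..N} b \<longrightarrow> inf_dim_fun_space (S_add N b))
       \<and> (1 < a 1 \<and> strict_mono_on {1..N} a \<longrightarrow> inf_dim_fun_space (S_mult N a))"
proof (intro conjI impI)
  assume "0 < b 1 \<and> strict_mono_on {1..N} b"
  then obtain h :: "nat \<Rightarrow> real \<Rightarrow> real" and p where
    "\<And>k. h k \<in> S_add N b" "\<And>k l. k \<noteq> l \<Longrightarrow> h k (p l) = 0" "\<And>k. h k (p k) \<noteq> 0"
    using dual_family_add[OF assms] by blast
  then show "inf_dim_fun_space (S_add N b)" by (rule inf_dim_fun_spaceI[OF subspace_S_add])
next
  assume a: "1 < a 1 \<and> strict_mono_on {1..N} a"
  note shifts = log_shifts[OF a[THEN conjunct1] a[THEN conjunct2]]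
  obtain h :: "nat \<Rightarrow> real \<Rightarrow> real" and p where
    h: "\<And>k. h k \<in> S_add N (\<lambda>i. ln (a i))" "\<And>k l. k \<noteq> l \<Longrightarrow> h k (p l) = 0" "\<And>k. h k (p k) \<noteq> 0"
    using dual_family_add[OF assms shifts(2,3)] by blast
  define f where "f k x = (if 0 < x then h k (ln x) else 0)" for k x
  show "inf_dim_fun_space (S_mult N a)"
  proof (rule inf_dim_fun_spaceI[OF subspace_S_mult, where h = f and p = "\<lambda>k. exp (p k)"])
    show "f k \<in> S_mult N a" for k unfolding f_def using S_add_to_S_mult h(1) shifts by blast
  qed (use h in \<open>simp_all add: f_def\<close>)
qed

end
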